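(* Let $0<q<1$ and $c,d,z_1,z_2\in\mathbb C$ with $cz_1\ne q^{-r}$ and $dz_2\ne q^{-r}$ for all integers $r\ge1$. Then the double series below converges absolutely and $$\sum_{m,n=0}^\infty\frac{q^{m^2-mn+n^2}\,h_{m,n}(z_1,z_2|q)}{(q,cz_1q;q)_m\,(q,dz_2q;q)_n}\,c^md^n=\frac{A_q(cd)}{(cz_1q,dz_2q;q)_\infty}.$$
   Context: $(a;q)_n=\prod_{j=0}^{n-1}(1-aq^j)$, $(a;q)_\infty=\prod_{j\ge0}(1-aq^j)$, $(a_1,\dots,a_r;q)_n=\prod_i(a_i;q)_n$, $\left[{m\atop k}\right]_q=\frac{(q;q)_m}{(q;q)_k(q;q)_{m-k}}$, $m\wedge n=\min\{m,n\}$. The second $q$-$2D$-Hermite polynomials are $$h_{m,n}(z_1,z_2|q)=\sum_{j=0}^{m\wedge n}\left[{m\atop j}\right]_q\left[{n\atop j}\right]_q q^{(m-j)(n-j)}(-1)^j(q;q)_j\,z_1^{m-j}z_2^{n-j}.$$ The Ramanujan function is $A_q(z)=\sum_{n=0}^\infty\frac{q^{n^2}}{(q;q)_n}(-z)^n$. *)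

theory Defs
  imports "HOL-Analysis.Analysis"
begin

definition qpoch :: "complex \<Rightarrow> complex \<Rightarrow> nat \<Rightarrow> complex" where
  "qpoch a q n = (\<Prod>j<n. 1 - a * q ^ j)"

definition qpoch_inf :: "complex \<Rightarrow> complex \<Rightarrow> complex" where
  "qpoch_inf a q = lim (\<lambda>n. qpoch a q n)"

definition qbinom :: "complex \<Rightarrow> nat \<Rightarrow> nat \<Rightarrow> complex" where
  "qbinom q m k = qpoch q q m / (qpoch q q k * qpoch q q (m - k))"

definition hermite2 :: "nat \<Rightarrow> nat \<Rightarrow> complex \<Rightarrow> complex \<Rightarrow> complex \<Rightarrow> complex" where
  "hermite2 m n z1 z2 q = (\<Sum>j\<le>min m n.
      qbinom q m j * qbinom q n j * q ^ ((m - j) * (n - j)) * (-1) ^ j * qpoch q q j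
      * z1 ^ (m - j) * z2 ^ (n - j))"

definition ramanujanA :: "complex \<Rightarrow> complex \<Rightarrow> complex" where
  "ramanujanA q z = (\<Sum>n. q ^ (n^2) / qpoch q q n * (-z) ^ n)"

end

theory Submission
  imports Defs
begin

text \<open>
  Put m = j + a and n = j + b. The j-th summand of h_{m,n} turns the (m,n)-term of the
  series into A_j F_j(a) G_j(b), where A_j = q^{j^2} (-cd)^j / (q;q)_j is the j-th term
  of A_q(cd) and F_j(a) = (c z_1)^a q^{a^2 + ja} / ((q;q)_a (c z_1 q;q)_{j+a}), G_j(b)
  likewise with d z_2. Cauchy's identity
    sum_k z^k q^{k^2} / ((q;q)_k (zq;q)_k) = 1/(zq;q)_\<infinity>,
  taken at z = c z_1 q^j, gives sum_a F_j(a) = 1/(c z_1 q;q)_\<infinity> for every j. The identity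
  is the limit n \<rightarrow> \<infinity> (by Tannery's theorem) of its finite form
    sum_k [n,k]_q z^k q^{k^2} / (zq;q)_k = 1/(zq;q)_n,
  which follows from the q-Pascal rule by induction on n. All three factors are dominated,
  uniformly in j, by Gaussian terms C R^k q^{k^2}; hence the triple series converges
  absolutely and may be summed first over a and b and then over j.
\<close>

lemma qpoch_0 [simp]: "qpoch a q 0 = 1"
  by (simp add: qpoch_def)

lemma qpoch_Suc: "qpoch a q (Suc n) = qpoch a q n * (1 - a * q ^ n)"
  by (simp add: qpoch_def)

lemma qpoch_add: "qpoch a q (m + n) = qpoch a q m * qpoch (a * q ^ m) q n"
  by (induction n) (simp_all add: qpoch_Suc power_add mult_ac)

lemma qpoch_Suc_left: "qpoch a q (Suc n) = (1 - a) * qpoch (a * q) q n"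
  using qpoch_add[of a q 1 n] by (simp add: qpoch_def)

lemma qpoch_self_nonzero:
  fixes q :: complex
  assumes "norm q < 1"
  shows "qpoch q q n \<noteq> 0"
proof -
  have "1 - q * q ^ j \<noteq> 0" for j
  proof
    assume "1 - q * q ^ j = 0"
    then have "norm q ^ Suc j = 1"
      by (metis eq_iff_diff_eq_0 norm_one norm_power power_Suc)
    moreover have "norm q ^ Suc j < 1"
      using assms by (subst power_less_one_iff) auto
    ultimately show False
      by simp
  qed
  then show ?thesis
    by (simp add: qpoch_def)
qed

lemma qpoch_nonzero_if_not_inverse_power:
  fixes x q :: complex
  assumes "\<And>r. r \<ge> 1 \<Longrightarrow> x \<noteq> 1 / q ^ r"
  shows "qpoch (x * q) q n \<noteq> 0"
proof -
  have "1 - x * q * q ^ j \<noteq> 0" for j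
  proof
    assume "1 - x * q * q ^ j = 0"
    then have "x * q ^ Suc j = 1"
      by (simp add: mult_ac)
    then have "x = 1 / q ^ Suc j"
      by (auto simp: eq_divide_eq)
    with assms[of "Suc j"] show False
      by simp
  qed
  then show ?thesis
    by (simp add: qpoch_def)
qed

lemma convergent_prod_qpoch:
  fixes q :: complex
  assumes "norm q < 1"
  shows "convergent_prod (\<lambda>j. 1 - a * q ^ j)"
proof -
  have "summable (\<lambda>j. norm ((1 - a * q ^ j) - 1))"
    using assms by (auto simp: norm_mult norm_power intro!: summable_mult summable_geometric)
  then show ?thesis
    by (intro abs_convergent_prod_imp_convergent_prod summable_imp_abs_convergent_prod)
qed

lemma qpoch_LIMSEQ_prodinf:
  fixes q :: complex
  assumes "norm q < 1"
  shows "(\<lambda>n. qpoch a q n) \<longlonglongrightarrow> (\<Prod>j. 1 - a * q ^ j)"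
proof -
  have "(\<lambda>n. qpoch a q (Suc n)) \<longlonglongrightarrow> (\<Prod>j. 1 - a * q ^ j)"
    using convergent_prod_LIMSEQ[OF convergent_prod_qpoch[OF assms]]
    by (simp add: qpoch_def lessThan_Suc_atMost)
  then show ?thesis
    by (simp add: filterlim_sequentially_Suc)
qed

lemma qpoch_inf_eq_prodinf:
  fixes q :: complex
  assumes "norm q < 1"
  shows "qpoch_inf a q = (\<Prod>j. 1 - a * q ^ j)"
  unfolding qpoch_inf_def using qpoch_LIMSEQ_prodinf[OF assms] by (rule limI)

lemma qpoch_LIMSEQ:
  fixes q :: complex
  assumes "norm q < 1"
  shows "(\<lambda>n. qpoch a q n) \<longlonglongrightarrow> qpoch_inf a q"
  using qpoch_LIMSEQ_prodinf[OF assms] by (simp add: qpoch_inf_eq_prodinf[OF assms])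

lemma qpoch_inf_nonzero:
  fixes q :: complex
  assumes "norm q < 1" and "\<And>n. qpoch a q n \<noteq> 0"
  shows "qpoch_inf a q \<noteq> 0"
proof -
  have "1 - a * q ^ j \<noteq> 0" for j
    using assms(2)[of "Suc j"] by (simp add: qpoch_Suc)
  then show ?thesis
    unfolding qpoch_inf_eq_prodinf[OF assms(1)] by (intro prodinf_nonzero convergent_prod_qpoch assms(1))
qed

lemma qpoch_inf_split:
  fixes q :: complex
  assumes "norm q < 1"
  shows "qpoch_inf a q = qpoch a q m * qpoch_inf (a * q ^ m) q"
proof (rule LIMSEQ_unique)
  show "(\<lambda>n. qpoch a q (m + n)) \<longlonglongrightarrow> qpoch_inf a q"
    using LIMSEQ_ignore_initial_segment[OF qpoch_LIMSEQ[OF assms, of a], of m]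
    by (simp add: add.commute)
  show "(\<lambda>n. qpoch a q (m + n)) \<longlonglongrightarrow> qpoch a q m * qpoch_inf (a * q ^ m) q"
    unfolding qpoch_add by (intro tendsto_mult_left qpoch_LIMSEQ[OF assms])
qed

lemma qpoch_bounded:
  fixes q :: complex
  assumes "norm q < 1"
  obtains B where "0 \<le> B" "\<And>n. norm (qpoch a q n) \<le> B"
proof -
  have "Bseq (\<lambda>n. qpoch a q n)"
    using qpoch_LIMSEQ[OF assms] by (rule convergent_imp_Bseq[OF convergentI])
  then obtain B where "B > 0" "\<And>n. norm (qpoch a q n) \<le> B"
    unfolding Bseq_def by blast
  then show ?thesis
    using that[of B] by simp
qed

lemma inverse_qpoch_bounded:
  fixes q :: complex
  assumes "norm q < 1" and "\<And>n. qpoch a q n \<noteq> 0"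
  obtains C where "0 \<le> C" "\<And>n. norm (1 / qpoch a q n) \<le> C"
proof -
  have "(\<lambda>n. 1 / qpoch a q n) \<longlonglongrightarrow> 1 / qpoch_inf a q"
    using assms qpoch_inf_nonzero by (intro tendsto_divide tendsto_const qpoch_LIMSEQ) auto
  then have "Bseq (\<lambda>n. 1 / qpoch a q n)"
    by (rule convergent_imp_Bseq[OF convergentI])
  then obtain C where "C > 0" "\<And>n. norm (1 / qpoch a q n) \<le> C"
    unfolding Bseq_def by blast
  then show ?thesis
    using that[of C] by simp
qed

text \<open>For k > n, qbinom q n k is not 0: the truncated difference n - k is 0.\<close>
definition qbinom_trunc :: "complex \<Rightarrow> nat \<Rightarrow> nat \<Rightarrow> complex" where
  "qbinom_trunc q n k = (if k \<le> n then qbinom q n k else 0)"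

lemma qbinom_trunc_0:
  fixes q :: complex
  assumes "norm q < 1"
  shows "qbinom_trunc q n 0 = 1"
  using qpoch_self_nonzero[OF assms] by (simp add: qbinom_trunc_def qbinom_def)

lemma qbinom_trunc_Suc_Suc:
  fixes q :: complex
  assumes "norm q < 1"
  shows "qbinom_trunc q (Suc n) (Suc k) = q ^ Suc k * qbinom_trunc q n (Suc k) + qbinom_trunc q n k"
proof (cases "k < n")
  case True
  then obtain r where n: "n = Suc (k + r)"
    using less_imp_Suc_add by blast
  note nz = qpoch_self_nonzero[OF assms]
  define u v where "u = 1 - q * q ^ k" and "v = 1 - q * q ^ r"
  have Suc_k: "qpoch q q (Suc k) = qpoch q q k * u" and Suc_r: "qpoch q q (Suc r) = qpoch q q r * v"
    by (simp_all add: qpoch_Suc u_def v_def)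
  have uv: "u \<noteq> 0" "v \<noteq> 0"
    using nz[of "Suc k"] nz[of "Suc r"] by (simp_all add: Suc_k Suc_r)
  have "qpoch q q (Suc (Suc (k + r))) = qpoch q q (Suc (k + r)) * (q ^ Suc k * v + u)"
    by (simp add: qpoch_Suc[of q q "Suc (k + r)"] algebra_simps power_add u_def v_def)
  then show ?thesis
    using nz[of k] nz[of r] uv
    by (simp add: n qbinom_trunc_def qbinom_def Suc_k Suc_r field_simps)
next
  case False
  then show ?thesis
    using qpoch_self_nonzero[OF assms] by (auto simp: qbinom_trunc_def qbinom_def)
qed

lemma qbinom_trunc_LIMSEQ:
  fixes q :: complex
  assumes "norm q < 1"
  shows "(\<lambda>n. qbinom_trunc q n k) \<longlonglongrightarrow> 1 / qpoch q q k"
proof -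
  note nz = qpoch_self_nonzero[OF assms]
  have inf_nz: "qpoch_inf q q \<noteq> 0"
    using qpoch_inf_nonzero[OF assms nz] .
  have "(\<lambda>n. qpoch q q n / (qpoch q q k * qpoch q q (n - k)))
      \<longlonglongrightarrow> qpoch_inf q q / (qpoch q q k * qpoch_inf q q)"
    using inf_nz nz
    by (intro tendsto_intros qpoch_LIMSEQ[OF assms]
        filterlim_compose[OF qpoch_LIMSEQ[OF assms] filterlim_minus_const_nat_at_top]) auto
  then have "(\<lambda>n. qpoch q q n / (qpoch q q k * qpoch q q (n - k))) \<longlonglongrightarrow> 1 / qpoch q q k"
    using inf_nz by simp
  then show ?thesis
    by (rule Lim_transform_eventually)
      (use eventually_ge_at_top[of k] in \<open>eventually_elim, simp add: qbinom_trunc_def qbinom_def\<close>)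
qed

lemma qbinom_trunc_bounded:
  fixes q :: complex
  assumes "norm q < 1"
  obtains G where "0 \<le> G" "\<And>n k. norm (qbinom_trunc q n k) \<le> G"
proof -
  obtain B where B: "0 \<le> B" "\<And>n. norm (qpoch q q n) \<le> B"
    using qpoch_bounded[OF assms] by blast
  obtain C where C: "0 \<le> C" "\<And>n. norm (1 / qpoch q q n) \<le> C"
    using inverse_qpoch_bounded[OF assms qpoch_self_nonzero[OF assms]] by blast
  have "norm (qbinom_trunc q n k) \<le> B * C * C" for n k
  proof (cases "k \<le> n")
    case True
    then have "norm (qbinom_trunc q n k)
        = norm (qpoch q q n) * norm (1 / qpoch q q k) * norm (1 / qpoch q q (n - k))"
      by (simp add: qbinom_trunc_def qbinom_def norm_mult norm_divide)
    also have "\<dots> \<le> B * C * C"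
      using B C by (intro mult_mono) auto
    finally show ?thesis .
  qed (use B C in \<open>simp add: qbinom_trunc_def\<close>)
  then show ?thesis
    using that[of "B * C * C"] B(1) C(1) by simp
qed

lemma summable_gaussian:
  fixes R r :: real
  assumes "0 \<le> r" "r < 1"
  shows "summable (\<lambda>k. R ^ k * r ^ (k\<^sup>2))"
proof (rule summable_comparison_test_ev[OF _ summable_geometric[of "1 / 2"]])
  have "(\<lambda>k. \<bar>R\<bar> * r ^ k) \<longlonglongrightarrow> \<bar>R\<bar> * 0"
    using assms by (intro tendsto_intros LIMSEQ_power_zero) auto
  then have "eventually (\<lambda>k. \<bar>R\<bar> * r ^ k < 1 / 2) sequentially"
    by (intro order_tendstoD) auto
  then show "eventually (\<lambda>k. norm (R ^ k * r ^ (k\<^sup>2)) \<le> (1 / 2) ^ k) sequentially"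
  proof eventually_elim
    case (elim k)
    have "norm (R ^ k * r ^ (k\<^sup>2)) = (\<bar>R\<bar> * r ^ k) ^ k"
      using assms by (simp add: abs_mult power_abs power_mult_distrib power2_eq_square power_mult)
    also have "\<dots> \<le> (1 / 2) ^ k"
      using elim assms by (intro power_mono) auto
    finally show ?case .
  qed
qed simp

definition cauchy_term :: "complex \<Rightarrow> complex \<Rightarrow> nat \<Rightarrow> complex" where
  "cauchy_term q z k = z ^ k * q ^ k\<^sup>2 / qpoch (z * q) q k"

lemma cauchy_term_shift:
  fixes q z :: complex
  assumes "qpoch (z * q) q (Suc k) \<noteq> 0"
  shows "cauchy_term q (z * q) k / (1 - z * q) = q ^ k * cauchy_term q z k + cauchy_term q z (Suc k)"
proof -
  define u where "u = 1 - z * q * q ^ k"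
  have qpoch_k: "qpoch (z * q) q (Suc k) = qpoch (z * q) q k * u"
    by (simp add: qpoch_Suc u_def)
  have nz: "qpoch (z * q) q k \<noteq> 0" "u \<noteq> 0"
    using assms by (simp_all add: qpoch_k)
  have den: "qpoch (z * q * q) q k * (1 - z * q) = qpoch (z * q) q k * u"
    using qpoch_Suc_left[of "z * q" q k] unfolding qpoch_k by (simp add: mult_ac)
  have sq: "q ^ (Suc k)\<^sup>2 = q ^ k\<^sup>2 * q ^ k * (q * q ^ k)"
    by (simp add: power2_eq_square algebra_simps flip: power_add)
  have "cauchy_term q (z * q) k / (1 - z * q) = (z * q) ^ k * q ^ k\<^sup>2 / (qpoch (z * q) q k * u)"
    unfolding cauchy_term_def by (simp only: divide_divide_eq_left den)
  also have "\<dots> = z ^ k * q ^ k\<^sup>2 * q ^ k * (u + z * q * q ^ k) / (qpoch (z * q) q k * u)"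
    by (simp add: u_def power_mult_distrib mult_ac)
  also have "\<dots> = z ^ k * q ^ k\<^sup>2 * q ^ k * u / (qpoch (z * q) q k * u)
      + z ^ k * q ^ k\<^sup>2 * q ^ k * (z * q * q ^ k) / (qpoch (z * q) q k * u)"
    by (simp add: distrib_left add_divide_distrib)
  also have "\<dots> = q ^ k * cauchy_term q z k + cauchy_term q z (Suc k)"
    using nz unfolding cauchy_term_def qpoch_k by (simp add: sq mult_ac)
  finally show ?thesis .
qed

lemma qbinom_trunc_pascal_sum:
  fixes q :: complex
  assumes q: "norm q < 1"
  shows "(\<Sum>k\<le>n. qbinom_trunc q n k * (q ^ k * t k + t (Suc k)))
    = (\<Sum>k\<le>Suc n. qbinom_trunc q (Suc n) k * t k)"
proof -
  have "(\<Sum>k\<le>n. qbinom_trunc q n k * (q ^ k * t k))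
      = (\<Sum>k\<le>Suc n. qbinom_trunc q n k * (q ^ k * t k))"
    by (simp add: qbinom_trunc_def)
  also have "\<dots> = t 0 + (\<Sum>k\<le>n. q ^ Suc k * qbinom_trunc q n (Suc k) * t (Suc k))"
    by (simp add: sum.atMost_Suc_shift qbinom_trunc_0[OF q] mult_ac del: sum.atMost_Suc)
  finally have shifted: "(\<Sum>k\<le>n. qbinom_trunc q n k * (q ^ k * t k))
      = t 0 + (\<Sum>k\<le>n. q ^ Suc k * qbinom_trunc q n (Suc k) * t (Suc k))" .
  have "(\<Sum>k\<le>Suc n. qbinom_trunc q (Suc n) k * t k)
      = t 0 + (\<Sum>k\<le>n. q ^ Suc k * qbinom_trunc q n (Suc k) * t (Suc k))
        + (\<Sum>k\<le>n. qbinom_trunc q n k * t (Suc k))"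
    by (simp add: sum.atMost_Suc_shift qbinom_trunc_0[OF q] qbinom_trunc_Suc_Suc[OF q]
        distrib_right sum.distrib del: sum.atMost_Suc)
  then show ?thesis
    unfolding shifted[symmetric] by (simp add: distrib_left sum.distrib)
qed

lemma cauchy_identity_finite:
  fixes q z :: complex
  assumes q: "norm q < 1" and "\<And>k. qpoch (z * q) q k \<noteq> 0"
  shows "(\<Sum>k\<le>n. qbinom_trunc q n k * cauchy_term q z k) = 1 / qpoch (z * q) q n"
  using assms(2)
proof (induction n arbitrary: z)
  case 0
  then show ?case
    using qbinom_trunc_0[OF q] by (simp add: cauchy_term_def)
next
  case (Suc n z)
  have "qpoch (z * q * q) q k \<noteq> 0" for k
    using Suc.prems[of "Suc k"] by (simp add: qpoch_Suc_left)
  then have "1 / qpoch (z * q) q (Suc n)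
      = (\<Sum>k\<le>n. qbinom_trunc q n k * cauchy_term q (z * q) k) / (1 - z * q)"
    by (simp add: Suc.IH qpoch_Suc_left)
  also have "\<dots> = (\<Sum>k\<le>n. qbinom_trunc q n k * (q ^ k * cauchy_term q z k + cauchy_term q z (Suc k)))"
    by (simp add: sum_divide_distrib cauchy_term_shift[OF Suc.prems, symmetric])
  also have "\<dots> = (\<Sum>k\<le>Suc n. qbinom_trunc q (Suc n) k * cauchy_term q z k)"
    by (rule qbinom_trunc_pascal_sum[OF q])
  finally show ?case ..
qed

lemma cauchy_identity:
  fixes q z :: complex
  assumes q: "norm q < 1" and nz: "\<And>k. qpoch (z * q) q k \<noteq> 0"
  shows "((\<lambda>k. cauchy_term q z k / qpoch q q k) has_sum 1 / qpoch_inf (z * q) q) UNIV"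
proof -
  obtain G where G: "0 \<le> G" "\<And>n k. norm (qbinom_trunc q n k) \<le> G"
    using qbinom_trunc_bounded[OF q] by blast
  obtain C where C: "0 \<le> C" "\<And>k. norm (1 / qpoch (z * q) q k) \<le> C"
    using inverse_qpoch_bounded[OF q nz] by blast
  define M where "M k = norm z ^ k * norm q ^ k\<^sup>2 * (G * C)" for k
  have "norm (qbinom_trunc q n k * cauchy_term q z k) \<le> M k" for n k
  proof -
    have "norm (qbinom_trunc q n k * cauchy_term q z k)
        = norm z ^ k * norm q ^ k\<^sup>2 * (norm (qbinom_trunc q n k) * norm (1 / qpoch (z * q) q k))"
      by (simp add: cauchy_term_def norm_mult norm_divide norm_power)
    also have "\<dots> \<le> M k"
      unfolding M_def using G C by (intro mult_left_mono mult_mono) simp_all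
    finally show ?thesis .
  qed
  then have bound: "eventually (\<lambda>(k, n). norm (qbinom_trunc q n k * cauchy_term q z k) \<le> M k)
      (at_top \<times>\<^sub>F sequentially)"
    by (intro always_eventually) auto
  have "summable M"
    unfolding M_def using q by (intro summable_mult2 summable_gaussian) auto
  have lim: "(\<lambda>n. qbinom_trunc q n k * cauchy_term q z k) \<longlonglongrightarrow> cauchy_term q z k / qpoch q q k"
    for k using tendsto_mult_right[OF qbinom_trunc_LIMSEQ[OF q]] by simp
  from tannerys_theorem[OF lim bound \<open>summable M\<close>]
  have tannery: "summable (\<lambda>k. norm (cauchy_term q z k / qpoch q q k))"
    "(\<lambda>n. \<Sum>k. qbinom_trunc q n k * cauchy_term q z k)
      \<longlonglongrightarrow> (\<Sum>k. cauchy_term q z k / qpoch q q k)"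
    by simp_all
  have "(\<Sum>k. qbinom_trunc q n k * cauchy_term q z k)
      = (\<Sum>k\<le>n. qbinom_trunc q n k * cauchy_term q z k)" for n by (rule suminf_finite) (simp_all add: qbinom_trunc_def)
  also have "\<dots> n = 1 / qpoch (z * q) q n" for n
    by (rule cauchy_identity_finite[OF q nz])
  finally have "(\<lambda>n. \<Sum>k. qbinom_trunc q n k * cauchy_term q z k) \<longlonglongrightarrow> 1 / qpoch_inf (z * q) q"
    using qpoch_inf_nonzero[OF q nz] by (simp, intro tendsto_intros qpoch_LIMSEQ[OF q]) auto
  then have "(\<Sum>k. cauchy_term q z k / qpoch q q k) = 1 / qpoch_inf (z * q) q"
    using tannery(2) LIMSEQ_unique by blast
  then have "(\<lambda>k. cauchy_term q z k / qpoch q q k) sums (1 / qpoch_inf (z * q) q)"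
    using summable_sums[OF summable_norm_cancel[OF tannery(1)]] by simp
  then show ?thesis
    by (rule norm_summable_imp_has_sum[OF tannery(1)])
qed

definition shifted_cauchy_term :: "complex \<Rightarrow> complex \<Rightarrow> nat \<Rightarrow> nat \<Rightarrow> complex" where
  "shifted_cauchy_term q x j a = x ^ a * q ^ (a\<^sup>2 + j * a) / (qpoch q q a * qpoch (x * q) q (j + a))"

lemma shifted_cauchy_term_has_sum:
  fixes q x :: complex
  assumes q: "norm q < 1" and nz: "\<And>k. qpoch (x * q) q k \<noteq> 0"
  shows "(shifted_cauchy_term q x j has_sum 1 / qpoch_inf (x * q) q) UNIV"
proof -
  define z where "z = x * q ^ j"
  have split: "qpoch (x * q) q (j + a) = qpoch (x * q) q j * qpoch (z * q) q a" for a
    by (simp add: qpoch_add z_def mult_ac)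
  have nz_z: "qpoch (z * q) q a \<noteq> 0" for a
    using nz[of "j + a"] by (simp add: split)
  have summand: "shifted_cauchy_term q x j a
      = 1 / qpoch (x * q) q j * (cauchy_term q z a / qpoch q q a)" for a
    unfolding shifted_cauchy_term_def cauchy_term_def split z_def power_add power_mult power_mult_distrib
    by (simp add: mult_ac)
  have "qpoch_inf (x * q) q = qpoch (x * q) q j * qpoch_inf (z * q) q"
    unfolding qpoch_inf_split[OF q, of "x * q" j] z_def by (simp add: mult_ac)
  then have "1 / qpoch (x * q) q j * (1 / qpoch_inf (z * q) q) = 1 / qpoch_inf (x * q) q"
    by simp
  then show ?thesis
    using has_sum_cmult_right[OF cauchy_identity[OF q nz_z], of "1 / qpoch (x * q) q j"]
    unfolding summand by simp
qed

lemma shifted_cauchy_term_dominated: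
  fixes q x :: complex
  assumes q: "norm q < 1" and nz: "\<And>k. qpoch (x * q) q k \<noteq> 0"
  obtains B where "B summable_on UNIV" "\<And>j a. norm (shifted_cauchy_term q x j a) \<le> B a"
proof -
  obtain C1 where C1: "0 \<le> C1" "\<And>n. norm (1 / qpoch q q n) \<le> C1"
    using inverse_qpoch_bounded[OF q qpoch_self_nonzero[OF q]] by blast
  obtain C2 where C2: "0 \<le> C2" "\<And>n. norm (1 / qpoch (x * q) q n) \<le> C2"
    using inverse_qpoch_bounded[OF q nz] by blast
  have "norm (shifted_cauchy_term q x j a) \<le> norm x ^ a * norm q ^ a\<^sup>2 * (C1 * C2)" for j a
  proof -
    have "norm (shifted_cauchy_term q x j a) = norm x ^ a * norm q ^ (a\<^sup>2 + j * a)
        * (norm (1 / qpoch q q a) * norm (1 / qpoch (x * q) q (j + a)))"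
      by (simp add: shifted_cauchy_term_def norm_mult norm_divide norm_power)
    also have "\<dots> \<le> norm x ^ a * norm q ^ a\<^sup>2 * (C1 * C2)"
      using q C1 C2 by (intro mult_mono mult_left_mono power_decreasing) simp_all
    finally show ?thesis .
  qed
  moreover have "(\<lambda>a. norm x ^ a * norm q ^ a\<^sup>2 * (C1 * C2)) summable_on UNIV"
    using q C1 C2 by (intro summable_nonneg_imp_summable_on_strong summable_mult2 summable_gaussian) auto
  ultimately show ?thesis
    using that by blast
qed

definition ramanujanA_term :: "complex \<Rightarrow> complex \<Rightarrow> nat \<Rightarrow> complex" where
  "ramanujanA_term q z n = q ^ n\<^sup>2 / qpoch q q n * (-z) ^ n"

lemma ramanujanA_term_has_sum:
  fixes q z :: complex
  assumes q: "norm q < 1"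
  shows "(ramanujanA_term q z has_sum ramanujanA q z) UNIV"
    and "(\<lambda>n. norm (ramanujanA_term q z n)) summable_on UNIV"
proof -
  obtain C where C: "0 \<le> C" "\<And>n. norm (1 / qpoch q q n) \<le> C"
    using inverse_qpoch_bounded[OF q qpoch_self_nonzero[OF q]] by blast
  have bound: "norm (ramanujanA_term q z n) \<le> norm z ^ n * norm q ^ n\<^sup>2 * C" for n
  proof -
    have "norm (ramanujanA_term q z n) = norm z ^ n * norm q ^ n\<^sup>2 * norm (1 / qpoch q q n)"
      by (simp add: ramanujanA_term_def norm_mult norm_divide norm_power)
    also have "\<dots> \<le> norm z ^ n * norm q ^ n\<^sup>2 * C"
      using C by (intro mult_left_mono) simp_all
    finally show ?thesis .
  qed
  have "summable (\<lambda>n. norm z ^ n * norm q ^ n\<^sup>2 * C)"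
    using q by (intro summable_mult2 summable_gaussian) simp_all
  then have norm_summable: "summable (\<lambda>n. norm (ramanujanA_term q z n))"
    by (rule summable_comparison_test'[where N = 0]) (simp add: bound)
  have "ramanujanA q z = (\<Sum>n. ramanujanA_term q z n)"
    by (simp add: ramanujanA_def ramanujanA_term_def)
  then have "ramanujanA_term q z sums ramanujanA q z"
    using summable_sums[OF summable_norm_cancel[OF norm_summable]] by simp
  then show "(ramanujanA_term q z has_sum ramanujanA q z) UNIV"
    by (rule norm_summable_imp_has_sum[OF norm_summable])
  show "(\<lambda>n. norm (ramanujanA_term q z n)) summable_on UNIV"
    using norm_summable by (intro norm_summable_imp_summable_on) simp
qed

lemma hermite2_summand_eq:
  fixes Q c d z1 z2 :: complex
  assumes nzQ: "\<And>k. qpoch Q Q k \<noteq> 0"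
    and nzX: "\<And>k. qpoch (c * z1 * Q) Q k \<noteq> 0" and nzY: "\<And>k. qpoch (d * z2 * Q) Q k \<noteq> 0"
  shows "Q ^ ((j + a)\<^sup>2 + (j + b)\<^sup>2 - (j + a) * (j + b))
      * (qbinom Q (j + a) j * qbinom Q (j + b) j * Q ^ (a * b) * (-1) ^ j * qpoch Q Q j * z1 ^ a * z2 ^ b)
      / (qpoch Q Q (j + a) * qpoch (c * z1 * Q) Q (j + a) * qpoch Q Q (j + b) * qpoch (d * z2 * Q) Q (j + b))
      * c ^ (j + a) * d ^ (j + b)
    = ramanujanA_term Q (c * d) j * (shifted_cauchy_term Q (c * z1) j a * shifted_cauchy_term Q (d * z2) j b)"
proof -
  define E where "E = (j + a)\<^sup>2 + (j + b)\<^sup>2 - (j + a) * (j + b)"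
  define K where "K = (-1) ^ j * c ^ j * d ^ j * (c * z1) ^ a * (d * z2) ^ b
    / (qpoch Q Q j * qpoch Q Q a * qpoch Q Q b * qpoch (c * z1 * Q) Q (j + a) * qpoch (d * z2 * Q) Q (j + b))"
  have "a * b \<le> a\<^sup>2 + b\<^sup>2"
    by (cases "a \<le> b") (simp_all add: power2_eq_square mult_le_mono trans_le_add1 trans_le_add2)
  then have "E + a * b = j\<^sup>2 + (a\<^sup>2 + j * a) + (b\<^sup>2 + j * b)"
    unfolding E_def by (simp add: power2_eq_square algebra_simps)
  then have exponent: "Q ^ E * Q ^ (a * b) = Q ^ j\<^sup>2 * Q ^ (a\<^sup>2 + j * a) * Q ^ (b\<^sup>2 + j * b)"
    by (simp flip: power_add)
  have "(-(c * d)) ^ j = (-1) ^ j * c ^ j * d ^ j"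
    by (simp add: power_minus[of "c * d"] power_mult_distrib)
  then have "ramanujanA_term Q (c * d) j * (shifted_cauchy_term Q (c * z1) j a * shifted_cauchy_term Q (d * z2) j b)
      = Q ^ j\<^sup>2 * Q ^ (a\<^sup>2 + j * a) * Q ^ (b\<^sup>2 + j * b) * K"
    by (simp add: ramanujanA_term_def shifted_cauchy_term_def K_def power_mult_distrib mult_ac)
  moreover have "Q ^ E
      * (qbinom Q (j + a) j * qbinom Q (j + b) j * Q ^ (a * b) * (-1) ^ j * qpoch Q Q j * z1 ^ a * z2 ^ b)
      / (qpoch Q Q (j + a) * qpoch (c * z1 * Q) Q (j + a) * qpoch Q Q (j + b) * qpoch (d * z2 * Q) Q (j + b))
      * c ^ (j + a) * d ^ (j + b) = Q ^ E * Q ^ (a * b) * K"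
    using nzQ[of j] nzQ[of a] nzQ[of b] nzQ[of "j + a"] nzQ[of "j + b"] nzX[of "j + a"] nzY[of "j + b"]
    by (simp add: qbinom_def K_def field_simps power_add power_mult_distrib)
  ultimately show ?thesis
    unfolding E_def[symmetric] exponent by simp
qed

lemma hermite2_series_term_eq:
  fixes Q c d z1 z2 :: complex
  assumes q: "norm Q < 1"
    and nzX: "\<And>k. qpoch (c * z1 * Q) Q k \<noteq> 0" and nzY: "\<And>k. qpoch (d * z2 * Q) Q k \<noteq> 0"
  shows "Q ^ (m\<^sup>2 + n\<^sup>2 - m * n) * hermite2 m n z1 z2 Q
      / (qpoch Q Q m * qpoch (c * z1 * Q) Q m * qpoch Q Q n * qpoch (d * z2 * Q) Q n) * c ^ m * d ^ n
    = (\<Sum>j\<le>min m n. ramanujanA_term Q (c * d) j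
        * (shifted_cauchy_term Q (c * z1) j (m - j) * shifted_cauchy_term Q (d * z2) j (n - j)))"
  unfolding hermite2_def sum_distrib_left sum_distrib_right sum_divide_distrib
proof (rule sum.cong[OF refl])
  fix j
  assume "j \<in> {..min m n}"
  then obtain a b where "m = j + a" "n = j + b"
    by (metis atMost_iff le_add_diff_inverse min.bounded_iff)
  then show "Q ^ (m\<^sup>2 + n\<^sup>2 - m * n)
      * (qbinom Q m j * qbinom Q n j * Q ^ ((m - j) * (n - j)) * (-1) ^ j * qpoch Q Q j
        * z1 ^ (m - j) * z2 ^ (n - j))
      / (qpoch Q Q m * qpoch (c * z1 * Q) Q m * qpoch Q Q n * qpoch (d * z2 * Q) Q n) * c ^ m * d ^ n
    = ramanujanA_term Q (c * d) j
        * (shifted_cauchy_term Q (c * z1) j (m - j) * shifted_cauchy_term Q (d * z2) j (n - j))"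
    using hermite2_summand_eq[OF qpoch_self_nonzero[OF q] nzX nzY, of j a b] by simp
qed

lemma has_sum_product:
  fixes f :: "'i \<Rightarrow> 'a::{real_normed_field, banach}" and g :: "'j \<Rightarrow> 'a"
  assumes h: "\<And>x y. h (x, y) = f x * g y"
    and f: "(f has_sum S) UNIV" "(\<lambda>x. norm (f x)) summable_on UNIV"
    and g: "(g has_sum T) UNIV" "(\<lambda>y. norm (g y)) summable_on UNIV"
  shows "(h has_sum S * T) UNIV"
    and "(\<lambda>p. norm (h p)) summable_on UNIV"
proof -
  have "(\<lambda>(x, y). norm (f x) * norm (g y)) summable_on Sigma UNIV (\<lambda>_. UNIV)"
  proof (rule summable_on_SigmaI)
    show "((\<lambda>y. (\<lambda>(x, y). norm (f x) * norm (g y)) (x, y))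
        has_sum norm (f x) * infsum (\<lambda>y. norm (g y)) UNIV) UNIV" for x
      using has_sum_cmult_right[OF has_sum_infsum[OF g(2)]] by simp
    show "(\<lambda>x. norm (f x) * infsum (\<lambda>y. norm (g y)) UNIV) summable_on UNIV"
      using summable_on_cmult_left[OF f(2)] by simp
  qed auto
  then have "(\<lambda>(x, y). norm (f x) * norm (g y)) summable_on UNIV"
    by simp
  then show norm_summable: "(\<lambda>p. norm (h p)) summable_on UNIV"
    by (rule Infinite_Sum.abs_summable_on_comparison_test') (simp add: h norm_mult split: prod.split)
  have "h summable_on Sigma UNIV (\<lambda>_. UNIV)"
    using abs_summable_summable[OF norm_summable] by simp
  then have "(h has_sum S * T) (Sigma UNIV (\<lambda>_. UNIV))"
    using has_sum_cmult_right[OF g(1)] has_sum_cmult_left[OF f(1)]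
    by (intro has_sum_SigmaI[where g = "\<lambda>x. f x * T"]) (simp_all add: h)
  then show "(h has_sum S * T) UNIV"
    by simp
qed

lemma has_sum_product_dominated:
  fixes A :: "'i \<Rightarrow> 'a::{real_normed_field, banach}"
    and F :: "'i \<Rightarrow> 'j \<Rightarrow> 'a" and G :: "'i \<Rightarrow> 'k \<Rightarrow> 'a"
  assumes W: "\<And>i x y. W (i, x, y) = A i * (F i x * G i y)"
    and A: "(A has_sum SA) UNIV" "(\<lambda>i. norm (A i)) summable_on UNIV"
    and F: "\<And>i. (F i has_sum SF) UNIV" "\<And>i x. norm (F i x) \<le> BF x" "BF summable_on UNIV"
    and G: "\<And>i. (G i has_sum SG) UNIV" "\<And>i y. norm (G i y) \<le> BG y" "BG summable_on UNIV"
  shows "(\<lambda>p. norm (W p)) summable_on UNIV"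
    and "(W has_sum SA * SF * SG) UNIV"
proof -
  have BF_nonneg: "0 \<le> BF x" for x
    using F(2) norm_ge_zero order_trans by blast
  have BG_nonneg: "0 \<le> BG y" for y
    using G(2) norm_ge_zero order_trans by blast
  define B where "B = (\<lambda>(x, y). BF x * BG y)"
  have BF_norm: "(\<lambda>x. norm (BF x)) summable_on UNIV"
    and BG_norm: "(\<lambda>y. norm (BG y)) summable_on UNIV"
    using F(3) G(3) BF_nonneg BG_nonneg by simp_all
  have B_sum: "(B has_sum infsum BF UNIV * infsum BG UNIV) UNIV"
    and B_norm: "(\<lambda>p. norm (B p)) summable_on UNIV"
    using has_sum_product[where h = B and f = BF and g = BG,
        OF _ has_sum_infsum[OF F(3)] BF_norm has_sum_infsum[OF G(3)] BG_norm]
    by (simp_all add: B_def)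
  have "(\<lambda>p. norm ((\<lambda>(i, xy). norm (A i) * B xy) p)) summable_on UNIV"
    using A(2)
    by (intro has_sum_product(2)[where f = "\<lambda>i. norm (A i)" and g = B,
          OF _ has_sum_infsum[OF A(2)] _ B_sum B_norm]) simp_all
  then show norm_summable: "(\<lambda>p. norm (W p)) summable_on UNIV"
  proof (rule Infinite_Sum.abs_summable_on_comparison_test')
    fix p :: "'i \<times> 'j \<times> 'k"
    obtain i x y where p: "p = (i, x, y)"
      by (cases p) auto
    have "norm (W p) = norm (A i) * (norm (F i x) * norm (G i y))"
      by (simp add: p W norm_mult)
    also have "\<dots> \<le> norm (A i) * (BF x * BG y)"
      using F(2) G(2) BF_nonneg by (intro mult_left_mono mult_mono) auto
    finally show "norm (W p) \<le> norm ((\<lambda>(i, xy). norm (A i) * B xy) p)"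
      using BF_nonneg BG_nonneg by (simp add: p B_def)
  qed
  have inner: "((\<lambda>xy. W (i, xy)) has_sum A i * SF * SG) UNIV" for i
  proof (rule has_sum_product(1)[where f = "\<lambda>x. A i * F i x" and g = "G i"])
    show "((\<lambda>x. A i * F i x) has_sum A i * SF) UNIV"
      by (rule has_sum_cmult_right[OF F(1)])
    show "(\<lambda>x. norm (A i * F i x)) summable_on UNIV"
      using Infinite_Sum.abs_summable_on_comparison_test'[OF F(3) F(2)]
      by (simp add: norm_mult summable_on_cmult_right)
    show "(\<lambda>y. norm (G i y)) summable_on UNIV"
      by (rule Infinite_Sum.abs_summable_on_comparison_test'[OF G(3) G(2)])
  qed (simp_all add: W G(1) mult_ac)
  have "W summable_on Sigma UNIV (\<lambda>_. UNIV)"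
    using abs_summable_summable[OF norm_summable] by simp
  then have "(W has_sum SA * SF * SG) (Sigma UNIV (\<lambda>_. UNIV))"
    using inner has_sum_cmult_left[OF A(1), of "SF * SG"]
    by (intro has_sum_SigmaI[where g = "\<lambda>i. A i * SF * SG"]) (simp_all add: mult.assoc)
  then show "(W has_sum SA * SF * SG) UNIV"
    by simp
qed

lemma has_sum_diagonal:
  fixes W :: "nat \<times> nat \<times> nat \<Rightarrow> 'a::{banach, uniform_topological_group_add}"
  assumes D: "\<And>m n. D (m, n) = (\<Sum>j\<le>min m n. W (j, m - j, n - j))"
    and W: "(W has_sum S) UNIV"
  shows "(D has_sum S) UNIV"
proof -
  define V where "V = (\<lambda>((m::nat, n::nat), j::nat). W (j, m - j, n - j))"
  define I where "I = Sigma (UNIV :: (nat \<times> nat) set) (\<lambda>(m, n). {..min m n})"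
  have "(W has_sum S) UNIV = (V has_sum S) I"
    by (rule has_sum_reindex_bij_witness[where i = "\<lambda>((m, n), j). (j, m - j, n - j)"
          and j = "\<lambda>(j, a, b). ((j + a, j + b), j)"])
      (auto simp: I_def V_def)
  with W have "(V has_sum S) (Sigma UNIV (\<lambda>(m, n). {..min m n}))"
    by (simp add: I_def)
  then show ?thesis
  proof (rule has_sum_Sigma')
    fix mn :: "nat \<times> nat"
    obtain m n where mn: "mn = (m, n)"
      by force
    show "((\<lambda>j. V (mn, j)) has_sum D mn) ((\<lambda>(m, n). {..min m n}) mn)"
      by (simp add: mn D V_def has_sum_finite)
  qed
qed

lemma abs_summable_diagonal:
  fixes W :: "nat \<times> nat \<times> nat \<Rightarrow> 'a::{banach, uniform_topological_group_add}"
  assumes D: "\<And>m n. D (m, n) = (\<Sum>j\<le>min m n. W (j, m - j, n - j))"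
    and W: "(\<lambda>p. norm (W p)) summable_on UNIV"
  shows "(\<lambda>p. norm (D p)) summable_on UNIV"
proof (rule Infinite_Sum.abs_summable_on_comparison_test')
  have "((\<lambda>(m, n). \<Sum>j\<le>min m n. norm (W (j, m - j, n - j)))
      has_sum infsum (\<lambda>p. norm (W p)) UNIV) UNIV"
    by (rule has_sum_diagonal[OF _ has_sum_infsum[OF W]]) simp
  then show "(\<lambda>(m, n). \<Sum>j\<le>min m n. norm (W (j, m - j, n - j))) summable_on UNIV"
    by (rule has_sum_imp_summable)
  show "norm (D p) \<le> (\<lambda>(m, n). \<Sum>j\<le>min m n. norm (W (j, m - j, n - j))) p" for p
    by (cases p) (simp add: D norm_sum)
qed

theorem corollary7p2:
  fixes q :: real and c d z1 z2 :: complex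
  assumes "0 < q" "q < 1"
    and "\<forall>r::nat. r \<ge> 1 \<longrightarrow> c * z1 \<noteq> 1 / (complex_of_real q) ^ r"
    and "\<forall>r::nat. r \<ge> 1 \<longrightarrow> d * z2 \<noteq> 1 / (complex_of_real q) ^ r"
  defines "Q \<equiv> complex_of_real q"
  defines "T \<equiv> (\<lambda>(m, n). Q ^ (m^2 + n^2 - m * n) * hermite2 m n z1 z2 Q
                 / (qpoch Q Q m * qpoch (c * z1 * Q) Q m * qpoch Q Q n * qpoch (d * z2 * Q) Q n)
                 * c ^ m * d ^ n)"
  shows "(\<lambda>mn. norm (T mn)) summable_on (UNIV :: (nat \<times> nat) set) \<and>
         (T has_sum (ramanujanA Q (c * d) / (qpoch_inf (c * z1 * Q) Q * qpoch_inf (d * z2 * Q) Q)))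
           (UNIV :: (nat \<times> nat) set)"
proof -
  have q: "norm Q < 1"
    using assms(1,2) by (simp add: Q_def)
  have nzX: "qpoch (c * z1 * Q) Q k \<noteq> 0" and nzY: "qpoch (d * z2 * Q) Q k \<noteq> 0" for k
    using assms(3,4) by (auto simp: Q_def intro!: qpoch_nonzero_if_not_inverse_power)
  define U where "U = (\<lambda>(j, a, b). ramanujanA_term Q (c * d) j
    * (shifted_cauchy_term Q (c * z1) j a * shifted_cauchy_term Q (d * z2) j b))"
  have U_eq: "U (j, a, b) = ramanujanA_term Q (c * d) j
    * (shifted_cauchy_term Q (c * z1) j a * shifted_cauchy_term Q (d * z2) j b)" for j a b
    by (simp add: U_def)
  have T_diagonal: "T (m, n) = (\<Sum>j\<le>min m n. U (j, m - j, n - j))" for m n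
    unfolding T_def using hermite2_series_term_eq[OF q nzX nzY] by (simp add: U_eq)
  obtain BX where BX: "BX summable_on UNIV" "\<And>j a. norm (shifted_cauchy_term Q (c * z1) j a) \<le> BX a"
    using shifted_cauchy_term_dominated[OF q nzX] by blast
  obtain BY where BY: "BY summable_on UNIV" "\<And>j b. norm (shifted_cauchy_term Q (d * z2) j b) \<le> BY b"
    using shifted_cauchy_term_dominated[OF q nzY] by blast
  note U = has_sum_product_dominated[OF U_eq ramanujanA_term_has_sum[OF q]
      shifted_cauchy_term_has_sum[OF q nzX] BX(2,1) shifted_cauchy_term_has_sum[OF q nzY] BY(2,1)]
  show ?thesis
    using abs_summable_diagonal[OF T_diagonal U(1)] has_sum_diagonal[OF T_diagonal U(2)]
    by simp
qed

end
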